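(* Let $n,k,\ell_{max}$ be positive integers, $F\subseteq\{1,\dots,n\}$ with $|F|=k$, $\varepsilon\in(0,1]$, $b$ a positive integer, and $\eta=\frac1{4k}$. Let $\sigma=\frac{4}{3\eta k}\,\ell_{max}\log_2 k+\frac{3}{\eta k\varepsilon}+\frac{b\log_2 k}{\log_2(16/15)}$. Let $x(t)\in\{0,1\}^n$ satisfy, for every $t\ge0$, $x_i(t)=1$ for $i\in F$ and $x_i(t)=0$ for $i\notin F$. Let $w_i(0)=\frac{1}{k^{\ell_{max}}}$ for all $i$, and for $t\ge1$ let $w(t)=w(t-1)+\eta\,z(t-1)\big(x(t-1)-z(t-1)w(t-1)\big)$ with $z(t-1)=w(t-1)\cdot x(t-1)$. Then for every $t\ge\sigma$: (1) for every $i\in F$, $w_i(t)\in\left[\frac{1}{(1+\varepsilon)\sqrt k},\frac1{\sqrt k}\right]$; (2) for every $i\notin F$, $w_i(t)\le\frac{1}{k^{\ell_{max}+b}}$.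
   Context: This describes a single neuron engaged in learning (Oja's rule) at every step, always receiving the same input vector in which exactly the coordinates in $F$ are $1$. In particular $\sigma=O\!\left(\frac1{\eta k}\left(\ell_{max}\log k+\frac1\varepsilon\right)+b\log k\right)$. *)

theory Defs
  imports Complex_Main
begin

end

theory Submission
  imports Defs
begin

text \<open>On \<open>F\<close> all weights stay equal, so with \<open>v = \<surd>k w\<^sub>i\<close> (the norm of the weight vector) the
dynamics reduce to the scalar recursion \<open>v' = v + v (1 - v\<^sup>2) / 4\<close>, while every weight outside
\<open>F\<close> is multiplied by \<open>1 - v\<^sup>2 / 4\<close> at each step. From \<open>v\<^sub>0 = \<surd>k / k^lmax\<close> the norm grows by a
factor \<open>19/16\<close> per step until it reaches \<open>1/2\<close>; since \<open>(19/16) powr (16/3) \<ge> 2\<close> this takes at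
most \<open>(16/3) lmax log\<^sub>2 k\<close> steps. Afterwards \<open>1 - v\<close> contracts by the factor \<open>13/16\<close> and the
weights outside \<open>F\<close> by \<open>15/16\<close> per step, which accounts for the other two terms of \<open>\<sigma>\<close>.\<close>

fun oja_norm :: "real \<Rightarrow> nat \<Rightarrow> real" where
  "oja_norm a 0 = a"
| "oja_norm a (Suc t) = oja_norm a t + oja_norm a t * (1 - (oja_norm a t)\<^sup>2) / 4"

lemma oja_norm_bounds:
  assumes "0 < a" "a \<le> 1"
  shows "0 < oja_norm a t \<and> oja_norm a t \<le> 1"
proof (induction t)
  case 0
  then show ?case using assms by simp
next
  case (Suc t)
  let ?v = "oja_norm a t"
  have v: "0 < ?v" "?v \<le> 1" "?v\<^sup>2 \<le> 1" using Suc by (auto simp: power_le_one)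
  have "oja_norm a (Suc t) = ?v * (5 - ?v\<^sup>2) / 4"
    by (simp add: algebra_simps diff_divide_distrib)
  moreover have "1 - oja_norm a (Suc t) = (1 - ?v) * (4 - ?v - ?v\<^sup>2) / 4"
    by (simp add: algebra_simps power2_eq_square diff_divide_distrib)
  moreover have "0 < ?v * (5 - ?v\<^sup>2)"
    using v by (intro mult_pos_pos) auto
  moreover have "0 \<le> (1 - ?v) * (4 - ?v - ?v\<^sup>2)"
    using v by (intro mult_nonneg_nonneg) auto
  ultimately show ?case by (intro conjI) linarith+
qed

lemma oja_norm_le_Suc:
  assumes "0 < a" "a \<le> 1"
  shows "oja_norm a t \<le> oja_norm a (Suc t)"
  using oja_norm_bounds[OF assms, of t] by (simp add: power_le_one)

lemma oja_norm_mono: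
  assumes "0 < a" "a \<le> 1" "s \<le> t"
  shows "oja_norm a s \<le> oja_norm a t"
  using oja_norm_le_Suc[OF assms(1,2)] assms(3) by (rule lift_Suc_mono_le)

lemma oja_norm_growth:
  assumes "0 < a" "a \<le> 1"
  shows "min (1/2) (a * (19/16)^t) \<le> oja_norm a t"
proof (induction t)
  case 0
  then show ?case by simp
next
  case (Suc t)
  let ?v = "oja_norm a t"
  show ?case
  proof (cases "1/2 \<le> ?v")
    case True
    then show ?thesis using oja_norm_le_Suc[OF assms, of t] by linarith
  next
    case False
    have "0 < ?v" using oja_norm_bounds[OF assms] by blast
    moreover have "?v * ?v \<le> 1/2 * (1/2)"
      using False \<open>0 < ?v\<close> by (intro mult_mono) auto
    ultimately have "?v * (19/16) \<le> oja_norm a (Suc t)"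
      by (simp add: algebra_simps power2_eq_square)
    moreover have "a * (19/16)^t \<le> ?v" using Suc False by linarith
    ultimately show ?thesis by simp
  qed
qed

lemma oja_norm_contraction:
  assumes "0 < a" "a \<le> 1" "1/2 \<le> oja_norm a t\<^sub>0"
  shows "1 - oja_norm a (t\<^sub>0 + m) \<le> (1 - oja_norm a t\<^sub>0) * (13/16)^m"
proof (induction m)
  case 0
  then show ?case by simp
next
  case (Suc m)
  let ?v = "oja_norm a (t\<^sub>0 + m)"
  have v: "1/2 \<le> ?v" "?v \<le> 1"
    using oja_norm_mono[OF assms(1,2), of t\<^sub>0 "t\<^sub>0 + m"] oja_norm_bounds[OF assms(1,2)] assms(3)
    by auto
  have "1 - oja_norm a (t\<^sub>0 + Suc m) = (1 - ?v) * (1 - ?v * (1 + ?v) / 4)"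
    by (simp add: power2_eq_square algebra_simps)
  also have "\<dots> \<le> (1 - ?v) * (13/16)"
    using v mult_mono[of "1/2" ?v "3/2" "1 + ?v"] by (intro mult_left_mono) auto
  also have "\<dots> \<le> (1 - oja_norm a t\<^sub>0) * (13/16)^m * (13/16)"
    using Suc by simp
  finally show ?case by simp
qed

lemma le_power_of_log_le:
  fixes c y :: real
  assumes "1 < c" "0 < y" "log c y \<le> real m"
  shows "y \<le> c ^ m"
  using assms by (simp add: log_le_iff powr_realpow)

lemma log2_19_16_ge: "3/16 \<le> log 2 (19/16 :: real)"
proof -
  have "(2 powr (3/16 :: real)) ^ 16 = 2 ^ 3"
    by (simp add: powr_realpow[symmetric] powr_powr)
  also have "\<dots> \<le> (19/16 :: real) ^ 16"
    by (simp add: power_divide)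
  finally have "2 powr (3/16 :: real) \<le> 19/16"
    using power_le_imp_le_base[of "2 powr (3/16)" 15 "19/16 :: real"] by simp
  then show ?thesis by (subst le_log_iff) auto
qed

lemma oja_norm_reaches_half:
  assumes "0 < a" "a \<le> 1" "16/3 * log 2 (1/a) \<le> real N"
  shows "1/2 \<le> oja_norm a N"
proof -
  have "log 2 (1/a) \<ge> 0" using assms(1,2) by simp
  have "log (19/16) (1/a) = log 2 (1/a) / log 2 (19/16)"
    by (rule log_base_change) auto
  also have "\<dots> \<le> log 2 (1/a) / (3/16)"
    using \<open>log 2 (1/a) \<ge> 0\<close> log2_19_16_ge by (intro divide_left_mono) auto
  finally have "log (19/16) (1/a) \<le> 16/3 * log 2 (1/a)" by simp
  then have "1/a \<le> (19/16)^N"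
    using assms by (intro le_power_of_log_le) auto
  then have "1 \<le> a * (19/16)^N"
    using assms(1) by (simp add: field_simps)
  then show ?thesis using oja_norm_growth[OF assms(1,2), of N] by linarith
qed

lemma power_13_16_le:
  fixes \<epsilon> :: real
  assumes "0 < \<epsilon>" "13 / (3 * \<epsilon>) \<le> real m"
  shows "(13/16)^m \<le> \<epsilon>"
proof -
  have "1 / \<epsilon> \<le> 1 + real m * (3/13)"
    using assms by (simp add: field_simps)
  also have "\<dots> \<le> (1 + 3/13)^m"
    by (rule Bernoulli_inequality) simp
  finally have "1 / \<epsilon> \<le> (16/13)^m" by simp
  then show ?thesis
    using assms(1) by (simp add: power_divide field_simps)
qed

lemma oja_norm_near_one:
  fixes \<epsilon> :: real
  assumes "0 < a" "a \<le> 1" "1/2 \<le> oja_norm a t\<^sub>0"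
    and "0 < \<epsilon>" "\<epsilon> \<le> 1" "13 / (3 * \<epsilon>) \<le> real m"
  shows "1 / (1 + \<epsilon>) \<le> oja_norm a (t\<^sub>0 + m)"
proof -
  have "1 - oja_norm a (t\<^sub>0 + m) \<le> (1 - oja_norm a t\<^sub>0) * (13/16)^m"
    by (rule oja_norm_contraction[OF assms(1-3)])
  also have "\<dots> \<le> (1/2) * (13/16)^m"
    using assms(3) by (intro mult_right_mono) auto
  also have "\<dots> \<le> \<epsilon> / 2"
    using power_13_16_le[OF assms(4,6)] by simp
  finally have "1 - \<epsilon> / 2 \<le> oja_norm a (t\<^sub>0 + m)" by simp
  moreover have "1 / (1 + \<epsilon>) \<le> 1 - \<epsilon> / 2"
    using assms(4,5) by (simp add: field_simps)
  ultimately show ?thesis by linarith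
qed

lemma power_15_16_le:
  fixes y :: real
  assumes "1 \<le> y" "real b * log 2 y / log 2 (16/15) \<le> real m"
  shows "(15/16)^m \<le> 1 / y ^ b"
proof -
  have "log (16/15) (y ^ b) = real b * log 2 y / log 2 (16/15)"
    using assms(1) by (simp add: log_nat_power log_base_change[of 2 "16/15"])
  then have "y ^ b \<le> (16/15)^m"
    using assms by (intro le_power_of_log_le) simp_all
  then have "1 / (16/15)^m \<le> 1 / y ^ b"
    using assms(1) by (intro divide_left_mono) auto
  then show ?thesis by (simp add: power_divide)
qed

lemma sqrt_div_power_bounds:
  fixes y :: real
  assumes "1 \<le> y" "0 < l"
  shows "sqrt y / y ^ l \<le> 1" and "log 2 (y ^ l / sqrt y) \<le> real l * log 2 y"
proof -
  have "sqrt y \<le> y"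
    using real_sqrt_le_iff[of y "y\<^sup>2"] assms(1) power_increasing[of 1 2 y] by simp
  also have "\<dots> \<le> y ^ l"
    by (rule self_le_power[OF assms])
  finally show "sqrt y / y ^ l \<le> 1"
    using assms(1) by (simp add: divide_le_eq)
  have "log 2 (y ^ l / sqrt y) \<le> log 2 (y ^ l)"
    using assms(1) by (simp add: divide_le_eq mult_le_cancel_left1)
  also have "\<dots> = real l * log 2 y"
    using assms(1) by (simp add: log_nat_power)
  finally show "log 2 (y ^ l / sqrt y) \<le> real l * log 2 y" .
qed

lemma ex_phase_split:
  fixes A B \<epsilon> :: real
  assumes "0 \<le> A" "0 \<le> B" "0 < \<epsilon>" "\<epsilon> \<le> 1" "A + 12 / \<epsilon> + B \<le> real t"
  obtains N m where "t = N + m" "A \<le> real N" "13 / (3 * \<epsilon>) \<le> real m" "B \<le> real m"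
proof -
  define N where "N = nat \<lceil>A\<rceil>"
  have "real N = of_int \<lceil>A\<rceil>"
    using assms(1) by (simp add: N_def)
  then have N: "A \<le> real N" "real N < A + 1"
    by linarith+
  have "1 \<le> 1 / \<epsilon>" "12 / \<epsilon> = 12 * (1 / \<epsilon>)" "13 / (3 * \<epsilon>) = 13/3 * (1 / \<epsilon>)"
    using assms(3,4) by simp_all
  then have "real N + 13 / (3 * \<epsilon>) \<le> real t" "real N + B \<le> real t"
    using assms(2,5) N by linarith+
  moreover have "0 \<le> 13 / (3 * \<epsilon>)"
    using assms(3) by simp
  ultimately have "real N \<le> real t"
    by linarith
  then have "N \<le> t" "real (t - N) = real t - real N"
    by (simp_all add: of_nat_diff)
  show ?thesis
  proof (rule that)
    show "t = N + (t - N)" using \<open>N \<le> t\<close> by simp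
    show "13 / (3 * \<epsilon>) \<le> real (t - N)" "B \<le> real (t - N)"
      using \<open>real (t - N) = real t - real N\<close> \<open>real N + 13 / (3 * \<epsilon>) \<le> real t\<close>
        \<open>real N + B \<le> real t\<close> by linarith+
  qed (rule N(1))
qed

locale oja_constant_input =
  fixes I F :: "'a set" and k :: nat and \<eta> c :: real
    and x w :: "nat \<Rightarrow> 'a \<Rightarrow> real" and z :: "nat \<Rightarrow> real"
  assumes finite_I: "finite I" and F_subset: "F \<subseteq> I" and card_F: "card F = k"
    and k_pos: "0 < k"
    and eta_eq: "\<eta> = 1 / (4 * real k)"
    and x_eq: "\<And>t i. i \<in> I \<Longrightarrow> x t i = (if i \<in> F then 1 else 0)"
    and w_0: "\<And>i. i \<in> I \<Longrightarrow> w 0 i = c"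
    and z_eq: "\<And>t. z t = (\<Sum>j\<in>I. w t j * x t j)"
    and w_Suc: "\<And>t i. i \<in> I \<Longrightarrow> w (Suc t) i = w t i + \<eta> * z t * (x t i - z t * w t i)"
begin

abbreviation norm_F :: "nat \<Rightarrow> real" where
  "norm_F \<equiv> oja_norm (sqrt (real k) * c)"

lemma z_eq_sum_F: "z t = (\<Sum>j\<in>F. w t j)"
proof -
  have "z t = (\<Sum>j\<in>I. if j \<in> F then w t j else 0)"
    unfolding z_eq by (rule sum.cong) (auto simp: x_eq)
  also have "\<dots> = (\<Sum>j\<in>F. w t j)"
    using finite_I F_subset by (simp add: sum.If_cases Int_absorb1)
  finally show ?thesis .
qed

lemma z_eq_if_const_on_F:
  assumes "\<And>i. i \<in> F \<Longrightarrow> w t i = u"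
  shows "z t = real k * u"
proof -
  have "finite F" using finite_I F_subset by (rule finite_subset[rotated])
  then show ?thesis using assms by (simp add: z_eq_sum_F card_F)
qed

lemma w_in_F: "i \<in> F \<Longrightarrow> w t i = norm_F t / sqrt (real k)"
proof (induction t arbitrary: i)
  case 0
  then show ?case using w_0 F_subset k_pos by auto
next
  case (Suc t)
  have "w (Suc t) i = norm_F t / sqrt k + \<eta> * (real k * (norm_F t / sqrt k))
                       * (1 - real k * (norm_F t / sqrt k) * (norm_F t / sqrt k))"
    using w_Suc[of i t] Suc F_subset z_eq_if_const_on_F[OF Suc.IH] by (auto simp: x_eq)
  also have "\<dots> = norm_F (Suc t) / sqrt (real k)"
    using k_pos by (simp add: eta_eq field_simps power2_eq_square)
  finally show ?case .
qed

lemma w_outside_F_Suc: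
  assumes "i \<in> I - F"
  shows "w (Suc t) i = w t i * (1 - (norm_F t)\<^sup>2 / 4)"
proof -
  have "w (Suc t) i = w t i - \<eta> * (real k * (norm_F t / sqrt k))
                       * (real k * (norm_F t / sqrt k)) * w t i"
    using w_Suc[of i t] assms z_eq_if_const_on_F[OF w_in_F] by (simp add: x_eq)
  also have "\<dots> = w t i * (1 - (norm_F t)\<^sup>2 / 4)"
    using k_pos by (simp add: eta_eq field_simps power2_eq_square)
  finally show ?thesis .
qed

lemma w_outside_F_bounds:
  assumes "0 < c" "sqrt (real k) * c \<le> 1" "i \<in> I - F"
  shows "0 \<le> w t i \<and> w t i \<le> c"
proof (induction t)
  case 0
  then show ?case using w_0 assms by simp
next
  case (Suc t)
  have "(norm_F t)\<^sup>2 \<le> 1"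
    using oja_norm_bounds[of "sqrt k * c" t] assms k_pos by (simp add: power_le_one)
  then have "0 \<le> 1 - (norm_F t)\<^sup>2 / 4" "1 - (norm_F t)\<^sup>2 / 4 \<le> 1" by auto
  then show ?case
    using Suc mult_left_le[of "1 - (norm_F t)\<^sup>2 / 4" "w t i"]
    by (simp add: w_outside_F_Suc[OF assms(3)])
qed

lemma w_outside_F_decay:
  assumes "0 < c" "sqrt (real k) * c \<le> 1" "i \<in> I - F" "1/2 \<le> norm_F t\<^sub>0"
  shows "w (t\<^sub>0 + j) i \<le> c * (15/16)^j"
proof (induction j)
  case 0
  then show ?case using w_outside_F_bounds[OF assms(1-3)] by simp
next
  case (Suc j)
  have init: "0 < sqrt (real k) * c" using assms(1) k_pos by simp
  have "1/2 \<le> norm_F (t\<^sub>0 + j)"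
    using assms(4) oja_norm_mono[OF init assms(2), of t\<^sub>0 "t\<^sub>0 + j"] by simp
  then have "1/2 * (1/2) \<le> norm_F (t\<^sub>0 + j) * norm_F (t\<^sub>0 + j)"
    by (intro mult_mono) auto
  then have "1 - (norm_F (t\<^sub>0 + j))\<^sup>2 / 4 \<le> 15/16"
    by (simp add: power2_eq_square)
  then have "w (t\<^sub>0 + Suc j) i \<le> w (t\<^sub>0 + j) i * (15/16)"
    unfolding add_Suc_right w_outside_F_Suc[OF assms(3)]
    using w_outside_F_bounds[OF assms(1-3)] by (intro mult_left_mono) auto
  also have "\<dots> \<le> c * (15/16)^j * (15/16)"
    using Suc by simp
  finally show ?case by simp
qed

lemma w_in_F_near_limit:
  fixes \<epsilon> :: real
  assumes "0 < c" "sqrt (real k) * c \<le> 1" "i \<in> F" "1/2 \<le> norm_F t\<^sub>0"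
    and "0 < \<epsilon>" "\<epsilon> \<le> 1" "13 / (3 * \<epsilon>) \<le> real m"
  shows "1 / ((1 + \<epsilon>) * sqrt (real k)) \<le> w (t\<^sub>0 + m) i \<and> w (t\<^sub>0 + m) i \<le> 1 / sqrt (real k)"
proof -
  have init: "0 < sqrt (real k) * c" using assms(1) k_pos by simp
  have "1 / (1 + \<epsilon>) \<le> norm_F (t\<^sub>0 + m)" "norm_F (t\<^sub>0 + m) \<le> 1"
    using oja_norm_near_one[OF init assms(2,4-7)] oja_norm_bounds[OF init assms(2)] by auto
  then show ?thesis
    using w_in_F[OF assms(3)] k_pos by (simp add: divide_right_mono flip: divide_divide_eq_left)
qed

end

theorem mainTheorem10:
  fixes n k lmax b :: nat and F :: "nat set" and \<epsilon> \<eta> \<sigma> :: real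
    and x w :: "nat \<Rightarrow> nat \<Rightarrow> real" and z :: "nat \<Rightarrow> real"
  assumes n_pos: "n > 0" and k_pos: "k > 0" and l_pos: "lmax > 0" and b_pos: "b > 0"
    and F_sub: "F \<subseteq> {1..n}" and F_card: "card F = k"
    and eps: "0 < \<epsilon>" "\<epsilon> \<le> 1"
    and eta_def: "\<eta> = 1 / (4 * real k)"
    and sigma_def: "\<sigma> = 4 / (3 * \<eta> * real k) * real lmax * log 2 (real k)
                 + 3 / (\<eta> * real k * \<epsilon>)
                 + real b * log 2 (real k) / log 2 (16 / 15)"
    and x_def: "\<And>t i. i \<in> {1..n} \<Longrightarrow> x t i = (if i \<in> F then 1 else 0)"
    and w0: "\<And>i. i \<in> {1..n} \<Longrightarrow> w 0 i = 1 / real k ^ lmax"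
    and z_def: "\<And>t. z t = (\<Sum>j\<in>{1..n}. w t j * x t j)"
    and w_step: "\<And>t i. i \<in> {1..n} \<Longrightarrow>
                   w (Suc t) i = w t i + \<eta> * z t * (x t i - z t * w t i)"
  shows "\<forall>t. real t \<ge> \<sigma> \<longrightarrow>
           (\<forall>i\<in>F. 1 / ((1 + \<epsilon>) * sqrt (real k)) \<le> w t i \<and> w t i \<le> 1 / sqrt (real k))
         \<and> (\<forall>i\<in>{1..n} - F. w t i \<le> 1 / real k ^ (lmax + b))"
proof -
  define c where "c = 1 / real k ^ lmax"
  interpret oja_constant_input "{1..n}" F k \<eta> c x w z
    using F_sub F_card k_pos eta_def x_def w0 z_def w_step by unfold_locales (auto simp: c_def)
  have k1: "1 \<le> real k" using k_pos by simp
  have c_pos: "0 < c" and init_le: "sqrt (real k) * c \<le> 1"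
    and log_init: "log 2 (1 / (sqrt (real k) * c)) \<le> real lmax * log 2 (real k)"
    using k1 sqrt_div_power_bounds[OF k1 l_pos] by (simp_all add: c_def)
  have sigma: "\<sigma> = 16/3 * real lmax * log 2 (real k) + 12 / \<epsilon>
                  + real b * log 2 (real k) / log 2 (16 / 15)"
    using k_pos by (simp add: sigma_def eta_def)
  show ?thesis
  proof (intro allI impI conjI ballI)
    fix t assume "\<sigma> \<le> real t"
    have "0 \<le> 16/3 * real lmax * log 2 (real k)" "0 \<le> real b * log 2 (real k) / log 2 (16 / 15)"
      using k1 by simp_all
    then obtain N m where t: "t = N + m" and N: "16/3 * real lmax * log 2 (real k) \<le> real N"
      and m_eps: "13 / (3 * \<epsilon>) \<le> real m"
      and m_b: "real b * log 2 (real k) / log 2 (16 / 15) \<le> real m"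
      using ex_phase_split[OF _ _ eps \<open>\<sigma> \<le> real t\<close>[unfolded sigma]] by blast
    have half: "1/2 \<le> norm_F N"
      using oja_norm_reaches_half[of "sqrt (real k) * c"] c_pos k_pos init_le log_init N by simp
    show "1 / ((1 + \<epsilon>) * sqrt (real k)) \<le> w t i" "w t i \<le> 1 / sqrt (real k)" if "i \<in> F" for i
      using w_in_F_near_limit[OF c_pos init_le that half eps m_eps] unfolding t by simp_all
    have "c * (15/16)^m \<le> 1 / real k ^ (lmax + b)"
      using c_pos mult_left_mono[OF power_15_16_le[OF k1 m_b], of c] by (simp add: c_def power_add)
    then show "w t i \<le> 1 / real k ^ (lmax + b)" if "i \<in> {1..n} - F" for i
      using w_outside_F_decay[OF c_pos init_le that half, of m] unfolding t by simp
  qed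
qed

end
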